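(* Let $G=(V,E)$ be a finite graph, $q\in\mathbb N$, $\beta\ge0$ and $p=1-e^{-\beta}$. Let $P_{\rm SW}$ be the transition matrix of the Swendsen--Wang dynamics for the $q$-state Potts model on $G$ at inverse temperature $\beta$, and $\tilde P_{\rm SW}$ that of the Swendsen--Wang dynamics for the random-cluster model on $G$ with parameters $p$ and $q$. Then $\lambda(P_{\rm SW})=\lambda(\tilde P_{\rm SW})$.
   Context: For $A\subseteq E$, $c(A)$ is the number of connected components of $(V,A)$; for $\sigma\in\{1,\dots,q\}^V$, $E(\sigma)$ is the set of edges whose endvertices have the same color. Potts measure $\pi(\sigma)=e^{\beta|E(\sigma)|}/Z$; RC measure $\mu(A)\propto(\tfrac{p}{1-p})^{|A|}q^{c(A)}$. $P_{\rm SW}(\sigma,\tau)=(1-p)^{|E(\sigma)|}\sum_{A\subseteq E(\sigma)\cap E(\tau)}(\tfrac{p}{1-p})^{|A|}q^{-c(A)}$ (reversible w.r.t. $\pi$); $\tilde P_{\rm SW}(A,B)=q^{-c(A)}(\tfrac{p}{1-p})^{|B|}\sum_{\sigma}(1-p)^{|E(\sigma)|}\mathbf 1(A\cup B\subseteq E(\sigma))$ (reversible w.r.t. $\mu$). Spectral gap: $\lambda(P)=1-\max\{|\xi|:\xi\text{ eigenvalue of }P,\ \xi\neq1\}$. *)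

theory Defs
  imports "HOL-Analysis.Analysis" "HOL-Library.FuncSet"
begin

definition finite_graph :: "'v set \<Rightarrow> 'v set set \<Rightarrow> bool" where
  "finite_graph V E \<longleftrightarrow> finite V \<and> (\<forall>e\<in>E. e \<subseteq> V \<and> card e = 2)"

definition ncomp :: "'v set \<Rightarrow> 'v set set \<Rightarrow> nat" where
  "ncomp V A = card (V // (({(u, v). {u, v} \<in> A})\<^sup>* \<inter> V \<times> V))"

definition potts_states :: "'v set \<Rightarrow> nat \<Rightarrow> ('v \<Rightarrow> nat) set" where
  "potts_states V q = V \<rightarrow>\<^sub>E {1..q}"

definition mono_edges :: "'v set set \<Rightarrow> ('v \<Rightarrow> nat) \<Rightarrow> 'v set set" where
  "mono_edges E \<sigma> = {e \<in> E. \<forall>u\<in>e. \<forall>v\<in>e. \<sigma> u = \<sigma> v}"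

definition P_SW :: "'v set \<Rightarrow> 'v set set \<Rightarrow> nat \<Rightarrow> real \<Rightarrow> ('v \<Rightarrow> nat) \<Rightarrow> ('v \<Rightarrow> nat) \<Rightarrow> real" where
  "P_SW V E q p \<sigma> \<tau> = (1 - p) ^ card (mono_edges E \<sigma>) *
     (\<Sum>A\<in>Pow (mono_edges E \<sigma> \<inter> mono_edges E \<tau>).
        (p / (1 - p)) ^ card A / real q ^ ncomp V A)"

definition P_SW_RC :: "'v set \<Rightarrow> 'v set set \<Rightarrow> nat \<Rightarrow> real \<Rightarrow> 'v set set \<Rightarrow> 'v set set \<Rightarrow> real" where
  "P_SW_RC V E q p A B = (1 / real q ^ ncomp V A) * (p / (1 - p)) ^ card B *
     (\<Sum>\<sigma>\<in>potts_states V q.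
        (1 - p) ^ card (mono_edges E \<sigma>) * (if A \<union> B \<subseteq> mono_edges E \<sigma> then 1 else 0))"

definition is_eigenvalue :: "'s set \<Rightarrow> ('s \<Rightarrow> 's \<Rightarrow> real) \<Rightarrow> complex \<Rightarrow> bool" where
  "is_eigenvalue S P \<xi> \<longleftrightarrow> (\<exists>f :: 's \<Rightarrow> complex. (\<exists>x\<in>S. f x \<noteq> 0) \<and>
      (\<forall>x\<in>S. (\<Sum>y\<in>S. complex_of_real (P x y) * f y) = \<xi> * f x))"

text \<open>Spectral gap 1 - max{|xi| : xi eigenvalue, xi ~= 1}; the max over the empty set is taken to be 0.\<close>
definition spectral_gap :: "'s set \<Rightarrow> ('s \<Rightarrow> 's \<Rightarrow> real) \<Rightarrow> real" where
  "spectral_gap S P = 1 - Max ({0} \<union> {cmod \<xi> | \<xi>. is_eigenvalue S P \<xi> \<and> \<xi> \<noteq> 1})"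

end

theory Submission
  imports Defs
begin

text \<open>
  Both chains are two-step chains through the joint Edwards--Sokal space of pairs
  (colouring, bond set): with the percolation kernel \<open>M\<close> (keep each monochromatic edge
  independently with probability \<open>p\<close>) and the recolouring kernel \<open>N\<close> (colour the
  components of a bond set uniformly at random) one has \<open>P\<^sub>S\<^sub>W = M N\<close> and
  \<open>P\<^sup>~\<^sub>S\<^sub>W = N M\<close>. For any two matrices the products \<open>M N\<close> and \<open>N M\<close> share their
  nonzero eigenvalues, and the spectral gap only depends on those.
\<close>

lemma is_eigenvalue_swap_factors:
  fixes S :: "'s set" and T :: "'t set"
  assumes P_eq: "\<And>x y. x \<in> S \<Longrightarrow> y \<in> S \<Longrightarrow> P x y = (\<Sum>z\<in>T. M x z * N z y)"
    and Q_eq: "\<And>z w. z \<in> T \<Longrightarrow> w \<in> T \<Longrightarrow> Q z w = (\<Sum>x\<in>S. N z x * M x w)"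
    and eigen: "is_eigenvalue S P \<xi>" and nonzero: "\<xi> \<noteq> 0"
  shows "is_eigenvalue T Q \<xi>"
proof -
  obtain f where f_nonzero: "\<exists>x\<in>S. f x \<noteq> 0"
    and f_eigen: "\<And>x. x \<in> S \<Longrightarrow> (\<Sum>y\<in>S. complex_of_real (P x y) * f y) = \<xi> * f x"
    using eigen unfolding is_eigenvalue_def by blast
  define g where "g z = (\<Sum>y\<in>S. complex_of_real (N z y) * f y)" for z
  have M_g: "(\<Sum>z\<in>T. complex_of_real (M x z) * g z) = \<xi> * f x" if x: "x \<in> S" for x
  proof -
    have "(\<Sum>z\<in>T. complex_of_real (M x z) * g z)
        = (\<Sum>y\<in>S. \<Sum>z\<in>T. complex_of_real (M x z * N z y) * f y)"
      by (subst sum.swap) (simp add: g_def sum_distrib_left mult.assoc)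
    also have "\<dots> = (\<Sum>y\<in>S. complex_of_real (P x y) * f y)"
      by (intro sum.cong refl) (simp add: P_eq[OF x] sum_distrib_right)
    finally show ?thesis using f_eigen[OF x] by simp
  qed
  have g_nonzero: "\<exists>z\<in>T. g z \<noteq> 0"
  proof (rule ccontr)
    assume "\<not> ?thesis"
    then have "\<xi> * f x = 0" if "x \<in> S" for x
      using M_g[OF that] by simp
    then show False using f_nonzero nonzero by auto
  qed
  have "(\<Sum>w\<in>T. complex_of_real (Q z w) * g w) = \<xi> * g z" if z: "z \<in> T" for z
  proof -
    have "(\<Sum>w\<in>T. complex_of_real (Q z w) * g w)
        = (\<Sum>w\<in>T. \<Sum>x\<in>S. complex_of_real (N z x) * (complex_of_real (M x w) * g w))"
      by (intro sum.cong refl) (simp add: Q_eq[OF z] sum_distrib_right mult.assoc)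
    also have "\<dots> = (\<Sum>x\<in>S. complex_of_real (N z x) * (\<Sum>w\<in>T. complex_of_real (M x w) * g w))"
      by (subst sum.swap) (simp add: sum_distrib_left)
    also have "\<dots> = (\<Sum>x\<in>S. complex_of_real (N z x) * (\<xi> * f x))"
      by (intro sum.cong refl) (simp add: M_g)
    also have "\<dots> = \<xi> * g z"
      by (simp add: g_def sum_distrib_left mult.left_commute)
    finally show ?thesis .
  qed
  with g_nonzero show ?thesis unfolding is_eigenvalue_def by blast
qed

lemma spectral_gap_swap_factors:
  fixes S :: "'s set" and T :: "'t set"
  assumes P_eq: "\<And>x y. x \<in> S \<Longrightarrow> y \<in> S \<Longrightarrow> P x y = (\<Sum>z\<in>T. M x z * N z y)"
    and Q_eq: "\<And>z w. z \<in> T \<Longrightarrow> w \<in> T \<Longrightarrow> Q z w = (\<Sum>x\<in>S. N z x * M x w)"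
  shows "spectral_gap S P = spectral_gap T Q"
proof -
  have same_nonzero: "is_eigenvalue S P \<xi> \<longleftrightarrow> is_eigenvalue T Q \<xi>" if "\<xi> \<noteq> 0" for \<xi>
    using that is_eigenvalue_swap_factors[OF P_eq Q_eq] is_eigenvalue_swap_factors[OF Q_eq P_eq]
    by blast
  have "{0} \<union> {cmod \<xi> | \<xi>. is_eigenvalue S P \<xi> \<and> \<xi> \<noteq> 1}
      = {0} \<union> {cmod \<xi> | \<xi>. is_eigenvalue T Q \<xi> \<and> \<xi> \<noteq> 1}"
    using same_nonzero by auto
  then show ?thesis unfolding spectral_gap_def by simp
qed

definition sw_percolation :: "'v set set \<Rightarrow> real \<Rightarrow> ('v \<Rightarrow> nat) \<Rightarrow> 'v set set \<Rightarrow> real" where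
  "sw_percolation E p \<sigma> A = (1 - p) ^ card (mono_edges E \<sigma>) * (p / (1 - p)) ^ card A *
     (if A \<subseteq> mono_edges E \<sigma> then 1 else 0)"

definition sw_recolouring :: "'v set \<Rightarrow> 'v set set \<Rightarrow> nat \<Rightarrow> 'v set set \<Rightarrow> ('v \<Rightarrow> nat) \<Rightarrow> real" where
  "sw_recolouring V E q A \<tau> = (1 / real q ^ ncomp V A) * (if A \<subseteq> mono_edges E \<tau> then 1 else 0)"

lemma mono_edges_subset: "mono_edges E \<sigma> \<subseteq> E"
  unfolding mono_edges_def by auto

lemma P_SW_factorization:
  assumes "finite E"
  shows "P_SW V E q p \<sigma> \<tau> = (\<Sum>A\<in>Pow E. sw_percolation E p \<sigma> A * sw_recolouring V E q A \<tau>)"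
proof -
  let ?w = "\<lambda>A. (p / (1 - p)) ^ card A / real q ^ ncomp V A"
  let ?bonds = "\<lambda>A. A \<subseteq> mono_edges E \<sigma> \<and> A \<subseteq> mono_edges E \<tau>"
  have "Pow (mono_edges E \<sigma> \<inter> mono_edges E \<tau>) = {A \<in> Pow E. ?bonds A}"
    using mono_edges_subset by auto
  then have "P_SW V E q p \<sigma> \<tau>
      = (1 - p) ^ card (mono_edges E \<sigma>) * (\<Sum>A\<in>Pow E. if ?bonds A then ?w A else 0)"
    unfolding P_SW_def using sum.inter_filter[of "Pow E" ?w ?bonds] assms by simp
  also have "\<dots> = (\<Sum>A\<in>Pow E. sw_percolation E p \<sigma> A * sw_recolouring V E q A \<tau>)"
    unfolding sum_distrib_left
    by (intro sum.cong refl) (simp add: sw_percolation_def sw_recolouring_def)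
  finally show ?thesis .
qed

lemma P_SW_RC_factorization:
  "P_SW_RC V E q p A B
     = (\<Sum>\<sigma>\<in>potts_states V q. sw_recolouring V E q A \<sigma> * sw_percolation E p \<sigma> B)"
  unfolding P_SW_RC_def sw_percolation_def sw_recolouring_def sum_distrib_left
  by (intro sum.cong refl) auto

lemma finite_graph_finite_edges:
  assumes "finite_graph V E"
  shows "finite E"
proof -
  have "E \<subseteq> Pow V" and "finite V"
    using assms unfolding finite_graph_def by auto
  then show ?thesis by (meson finite_Pow_iff finite_subset)
qed

text \<open>The factorisations hold for every \<open>p\<close> and \<open>q\<close>, so only the finiteness of the graph is used.\<close>

theorem lemma2p6:
  fixes V :: "'v set" and E :: "'v set set" and q :: nat and \<beta> p :: real
  assumes "finite_graph V E"
    and "q \<ge> 1"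
    and "\<beta> \<ge> 0"
    and "p = 1 - exp (- \<beta>)"
  shows "spectral_gap (potts_states V q) (P_SW V E q p)
       = spectral_gap (Pow E) (P_SW_RC V E q p)"
  using P_SW_factorization[OF finite_graph_finite_edges[OF assms(1)]] P_SW_RC_factorization
  by (rule spectral_gap_swap_factors)

end
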